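(* Let $2\le n\le\kappa+1$. Then the subspace $\mathcal K_{[n;\kappa]}$ of skew-symmetric games in $\mathcal G_{[n;\kappa]}\cong\mathbb R^{n\kappa^n}$ has dimension $$\dim\mathcal K_{[n;\kappa]}=\kappa\binom{\kappa}{n-1}=\frac{\kappa\cdot\kappa!}{(n-1)!\,(\kappa-n+1)!}.$$
   Context: A finite game $G\in\mathcal G_{[n;\kappa]}$ has players $\{1,\dots,n\}$, each with strategy set $\{1,\dots,\kappa\}$, and payoff functions $c_i:\{1,\dots,\kappa\}^n\to\mathbb R$; it is identified with the vector of all payoff values in $\mathbb R^{n\kappa^n}$. $G$ is skew-symmetric if for every permutation $\sigma\in\mathbf S_n$, every $i$ and every profile, $c_i(x_1,\dots,x_n)=\mathrm{sgn}(\sigma)\,c_{\sigma(i)}(x_{\sigma^{-1}(1)},\dots,x_{\sigma^{-1}(n)})$. $\mathcal K_{[n;\kappa]}$ is the linear subspace of skew-symmetric games. *)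

theory Defs
  imports Complex_Main "HOL-Library.Function_Algebras" "HOL-Combinatorics.Permutations"
begin

text \<open>A game is a payoff function c :: player \<Rightarrow> profile \<Rightarrow> real, vanishing outside
  the players/profiles; this space is (isomorphic to) R^(n kappa^n).\<close>

definition profiles :: "nat \<Rightarrow> nat \<Rightarrow> (nat \<Rightarrow> nat) set" where
  "profiles n \<kappa> = PiE {1..n} (\<lambda>_. {1..\<kappa>})"

type_synonym game = "nat \<Rightarrow> (nat \<Rightarrow> nat) \<Rightarrow> real"

definition games :: "nat \<Rightarrow> nat \<Rightarrow> game set" where
  "games n \<kappa> = {c. \<forall>i x. c i x \<noteq> 0 \<longrightarrow> i \<in> {1..n} \<and> x \<in> profiles n \<kappa>}"

definition game_scale :: "real \<Rightarrow> game \<Rightarrow> game" where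
  "game_scale r c = (\<lambda>i x. r * c i x)"

definition skew_symmetric :: "nat \<Rightarrow> nat \<Rightarrow> game \<Rightarrow> bool" where
  "skew_symmetric n \<kappa> c \<longleftrightarrow>
     (\<forall>\<sigma>. \<sigma> permutes {1..n} \<longrightarrow>
        (\<forall>i\<in>{1..n}. \<forall>x\<in>profiles n \<kappa>.
           c i x = of_int (sign \<sigma>) * c (\<sigma> i) (x \<circ> inv \<sigma>)))"

definition skew_games :: "nat \<Rightarrow> nat \<Rightarrow> game set" where
  "skew_games n \<kappa> = {c \<in> games n \<kappa>. skew_symmetric n \<kappa> c}"

end

theory Submission
  imports Defs
begin

(* Skew-symmetry gives c i (x \<circ> p) = sign p * c (p i) x, and it forces c i x = 0 when two
  players other than i use the same strategy. So a skew-symmetric game is determined by the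
  values of c 1 at one representative profile of each orbit, an orbit being labelled by the
  strategy of player 1 together with the (n - 1)-element set of strategies of the other players.
  Conversely, antisymmetrising the indicator of (1, r) for each representative r yields a
  skew-symmetric game equal to 1 at (1, r) and 0 at the other representatives; these games form
  a basis, of cardinality \<kappa> * (\<kappa> choose (n - 1)). *)

interpretation game: vector_space game_scale
  by unfold_locales (auto simp: game_scale_def fun_eq_iff algebra_simps)

lemma sum_game_apply: "(sum f A) i x = (\<Sum>a\<in>A. (f a :: game) i x)"
  by (induction A rule: infinite_finite_induct) auto

lemma profile_comp_permutes:
  assumes r: "r \<in> profiles n \<kappa>" and p: "p permutes {1..n}"
  shows "r \<circ> p \<in> profiles n \<kappa>"
  using r permutes_in_image[OF p] permutes_not_in[OF p]
  by (fastforce simp: profiles_def PiE_def Pi_def extensional_def)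

lemma permutes_image_remove_fixpoint:
  assumes q: "q permutes A" and "q a = a"
  shows "q ` (A - {a}) = A - {a}"
  by (simp add: image_set_diff[OF permutes_inj[OF q]] permutes_image[OF q] assms(2))

lemma skew_symmetric_comp:
  assumes c: "skew_symmetric n \<kappa> c" and p: "p permutes {1..n}"
    and i: "i \<in> {1..n}" and x: "x \<in> profiles n \<kappa>"
  shows "c i (x \<circ> p) = of_int (sign p) * c (p i) x"
proof -
  have "c i (x \<circ> p) = of_int (sign p) * c (p i) (x \<circ> p \<circ> inv p)"
    using c p i profile_comp_permutes[OF x p] unfolding skew_symmetric_def by blast
  then show ?thesis by (simp add: o_assoc[symmetric] permutes_inv_o(1)[OF p])
qed

lemma skew_symmetric_repeated_strategy:
  assumes c: "skew_symmetric n \<kappa> c" and i: "i \<in> {1..n}" and x: "x \<in> profiles n \<kappa>"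
    and j: "j \<in> {1..n} - {i}" and k: "k \<in> {1..n} - {i}" and "j \<noteq> k" and "x j = x k"
  shows "c i x = 0"
proof -
  have s: "transpose j k permutes {1..n}" using j k by (intro permutes_swap_id) auto
  have "x \<circ> transpose j k = x" by (rule ext) (auto simp: \<open>x j = x k\<close> transpose_def)
  moreover have "transpose j k i = i" using j k by (auto simp: transpose_def)
  ultimately have "c i x = - c i x"
    using skew_symmetric_comp[OF c s i x] \<open>j \<noteq> k\<close> by (simp add: sign_swap_id)
  then show ?thesis by simp
qed

definition antisymmetrize :: "nat \<Rightarrow> game \<Rightarrow> game" where
  "antisymmetrize n f =
     (\<lambda>i x. \<Sum>p | p permutes {1..n}. of_int (sign p) * f (p i) (x \<circ> inv p))"

lemma antisymmetrize_skew_symmetric: "skew_symmetric n \<kappa> (antisymmetrize n f)"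
  unfolding skew_symmetric_def
proof (intro allI impI ballI)
  fix \<sigma> i x assume s: "\<sigma> permutes {1..n}"
  have perm: "permutation p" if "p permutes {1..n}" for p
    using that by (auto simp: permutation_permutes)
  let ?term = "\<lambda>i x p. of_int (sign p) * f (p i) (x \<circ> inv p) :: real"
  have "antisymmetrize n f (\<sigma> i) (x \<circ> inv \<sigma>)
      = (\<Sum>p | p permutes {1..n}. ?term (\<sigma> i) (x \<circ> inv \<sigma>) (p \<circ> inv \<sigma>))"
    unfolding antisymmetrize_def by (rule sum_permutations_compose_right[OF permutes_inv[OF s]])
  also have "\<dots> = (\<Sum>p | p permutes {1..n}. of_int (sign \<sigma>) * ?term i x p)"
  proof (rule sum.cong[OF refl])
    fix p assume "p \<in> {p. p permutes {1..n}}"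
    then have p: "p permutes {1..n}" by simp
    have "sign (p \<circ> inv \<sigma>) = sign p * sign \<sigma>"
      using sign_compose[OF perm[OF p] perm[OF permutes_inv[OF s]]] sign_inverse[OF perm[OF s]]
      by simp
    moreover have "inv (p \<circ> inv \<sigma>) = \<sigma> \<circ> inv p"
      by (simp add: o_inv_distrib permutes_bij[OF p] permutes_bij[OF s] bij_imp_bij_inv inv_inv_eq)
    then have "x \<circ> inv \<sigma> \<circ> inv (p \<circ> inv \<sigma>) = x \<circ> inv p"
      by (simp add: fun_eq_iff permutes_inverses(2)[OF s])
    ultimately show "?term (\<sigma> i) (x \<circ> inv \<sigma>) (p \<circ> inv \<sigma>) = of_int (sign \<sigma>) * ?term i x p"
      using permutes_inverses(2)[OF s] by simp
  qed
  finally have "antisymmetrize n f (\<sigma> i) (x \<circ> inv \<sigma>) = of_int (sign \<sigma>) * antisymmetrize n f i x"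
    by (simp add: antisymmetrize_def sum_distrib_left)
  moreover have "(of_int (sign \<sigma>) :: real) * of_int (sign \<sigma>) = 1"
    by (metis of_int_1 of_int_mult sign_idempotent)
  ultimately show "antisymmetrize n f i x = of_int (sign \<sigma>) * antisymmetrize n f (\<sigma> i) (x \<circ> inv \<sigma>)"
    by (simp add: mult.assoc[symmetric])
qed

lemma antisymmetrize_in_games:
  assumes f: "f \<in> games n \<kappa>"
  shows "antisymmetrize n f \<in> games n \<kappa>"
  unfolding games_def
proof (intro CollectI allI impI)
  fix i x assume "antisymmetrize n f i x \<noteq> 0"
  then obtain p where p: "p permutes {1..n}" and "f (p i) (x \<circ> inv p) \<noteq> 0"
    unfolding antisymmetrize_def by (metis (no_types, lifting) mem_Collect_eq mult_zero_right
        sum.not_neutral_contains_not_neutral)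
  then have "p i \<in> {1..n}" and x': "x \<circ> inv p \<in> profiles n \<kappa>"
    using f unfolding games_def by auto
  moreover have "x = x \<circ> inv p \<circ> p"
    by (simp add: comp_assoc permutes_inv_o(2)[OF p])
  ultimately show "i \<in> {1..n} \<and> x \<in> profiles n \<kappa>"
    using permutes_in_image[OF p] profile_comp_permutes[OF x' p] by simp
qed

definition orbit_labels :: "nat \<Rightarrow> nat \<Rightarrow> (nat \<times> nat set) set" where
  "orbit_labels n \<kappa> = {1..\<kappa>} \<times> {S. S \<subseteq> {1..\<kappa>} \<and> card S = n - 1}"

definition orbit_rep :: "nat \<Rightarrow> nat \<Rightarrow> nat \<times> nat set \<Rightarrow> (nat \<Rightarrow> nat)" where
  "orbit_rep n \<kappa> t =
     (SOME r. r \<in> profiles n \<kappa> \<and> r 1 = fst t \<and> inj_on r {2..n} \<and> r ` {2..n} = snd t)"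

definition skew_basis :: "nat \<Rightarrow> nat \<Rightarrow> nat \<times> nat set \<Rightarrow> game" where
  "skew_basis n \<kappa> t = antisymmetrize n (\<lambda>i x. if i = 1 \<and> x = orbit_rep n \<kappa> t then 1 else 0)"

lemma finite_orbit_labels: "finite (orbit_labels n \<kappa>)"
  unfolding orbit_labels_def by (auto intro: finite_subset[of _ "Pow {1..\<kappa>}"])

lemma card_orbit_labels: "card (orbit_labels n \<kappa>) = \<kappa> * (\<kappa> choose (n - 1))"
  unfolding orbit_labels_def card_cartesian_product using n_subsets[of "{1..\<kappa>}" "n - 1"] by simp

context
  fixes n \<kappa> :: nat
  assumes n_pos: "1 \<le> n"
begin

lemma orbit_rep_exists:
  assumes "(a, S) \<in> orbit_labels n \<kappa>"
  shows "\<exists>r. r \<in> profiles n \<kappa> \<and> r 1 = a \<and> inj_on r {2..n} \<and> r ` {2..n} = S"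
proof -
  have a: "a \<in> {1..\<kappa>}" and S: "S \<subseteq> {1..\<kappa>}" "card S = n - 1"
    using assms unfolding orbit_labels_def by auto
  then have "finite S" using finite_subset by blast
  moreover have "card {2..n} = card S" using S by simp
  ultimately obtain f where f: "bij_betw f {2..n} S"
    using finite_same_card_bij[of "{2..n}" S] by auto
  define r where "r k = (if k = 1 then a else if k \<in> {2..n} then f k else undefined)" for k
  have "f k \<in> {1..\<kappa>}" if "k \<in> {2..n}" for k using bij_betwE[OF f] S(1) that by blast
  then have "r \<in> profiles n \<kappa>"
    using a n_pos by (auto simp: r_def profiles_def PiE_def extensional_def)
  moreover have "bij_betw r {2..n} S" using f by (rule bij_betw_cong[THEN iffD1, rotated]) (simp add: r_def)
  ultimately show ?thesis by (auto simp: r_def bij_betw_def)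
qed

lemma orbit_rep:
  assumes "t \<in> orbit_labels n \<kappa>"
  shows "orbit_rep n \<kappa> t \<in> profiles n \<kappa>" "orbit_rep n \<kappa> t 1 = fst t"
    "inj_on (orbit_rep n \<kappa> t) {2..n}" "orbit_rep n \<kappa> t ` {2..n} = snd t"
  using someI_ex[OF orbit_rep_exists[of "fst t" "snd t"]] assms unfolding orbit_rep_def by auto

lemma orbit_rep_comp_eq:
  assumes t: "t \<in> orbit_labels n \<kappa>" and u: "u \<in> orbit_labels n \<kappa>"
    and q: "q permutes {1..n}" and "q 1 = 1" and eq: "orbit_rep n \<kappa> u = orbit_rep n \<kappa> t \<circ> q"
  shows "u = t \<and> q = id"
proof -
  let ?r = "orbit_rep n \<kappa> t"
  have "{2..n} = {1..n} - {1}" by auto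
  then have q_others: "q ` {2..n} = {2..n}"
    using permutes_image_remove_fixpoint[OF q \<open>q 1 = 1\<close>] by simp
  have "fst u = fst t" using orbit_rep(2)[OF u] orbit_rep(2)[OF t] eq \<open>q 1 = 1\<close> by simp
  moreover have "snd u = ?r ` q ` {2..n}"
    using orbit_rep(4)[OF u] eq by (simp add: image_comp)
  then have "snd u = snd t" using orbit_rep(4)[OF t] q_others by simp
  ultimately have "u = t" by (simp add: prod_eq_iff)
  have "q k = k" for k
  proof (cases "k \<in> {2..n}")
    case True
    have "q k \<in> {2..n}" using q_others True by blast
    moreover have "?r (q k) = ?r k" using fun_cong[OF eq, of k] \<open>u = t\<close> by simp
    ultimately show ?thesis using inj_onD[OF orbit_rep(3)[OF t]] True by blast
  next
    case False
    then show ?thesis using \<open>q 1 = 1\<close> permutes_not_in[OF q] by (cases "k = 1") auto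
  qed
  with \<open>u = t\<close> show ?thesis by auto
qed

lemma orbit_rep_comp_unique:
  assumes t: "t \<in> orbit_labels n \<kappa>" and u: "u \<in> orbit_labels n \<kappa>"
    and p: "p permutes {1..n}" "p i = 1" and p': "p' permutes {1..n}" "p' i = 1"
    and eq: "orbit_rep n \<kappa> t \<circ> p = orbit_rep n \<kappa> u \<circ> p'"
  shows "t = u \<and> p = p'"
proof -
  define q where "q = p \<circ> inv p'"
  have q: "q permutes {1..n}" unfolding q_def by (intro permutes_compose permutes_inv p p')
  have "q 1 = 1" using p(2) p' permutes_inverses(2)[OF p'(1), of i] by (simp add: q_def)
  have "orbit_rep n \<kappa> u = orbit_rep n \<kappa> u \<circ> p' \<circ> inv p'"
    by (simp add: comp_assoc permutes_inv_o(1)[OF p'(1)])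
  also have "\<dots> = orbit_rep n \<kappa> t \<circ> q" by (simp add: eq[symmetric] q_def comp_assoc)
  finally have "u = t \<and> q = id" by (rule orbit_rep_comp_eq[OF t u q \<open>q 1 = 1\<close>])
  moreover have "p = q \<circ> p'" by (simp add: q_def comp_assoc permutes_inv_o(2)[OF p'(1)])
  ultimately show ?thesis by simp
qed

lemma skew_basis_in_skew_games:
  assumes "t \<in> orbit_labels n \<kappa>"
  shows "skew_basis n \<kappa> t \<in> skew_games n \<kappa>"
proof -
  have "(\<lambda>i x. if i = 1 \<and> x = orbit_rep n \<kappa> t then 1 else 0) \<in> games n \<kappa>"
    using orbit_rep(1)[OF assms] n_pos by (simp add: games_def)
  then show ?thesis
    unfolding skew_basis_def skew_games_def
    using antisymmetrize_in_games antisymmetrize_skew_symmetric by blast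
qed

lemma skew_basis_nonzeroD:
  assumes "skew_basis n \<kappa> t i x \<noteq> 0"
  shows "\<exists>p. p permutes {1..n} \<and> p i = 1 \<and> x = orbit_rep n \<kappa> t \<circ> p"
proof -
  obtain p where "p \<in> {p. p permutes {1..n}}"
    and "of_int (sign p) * (if p i = 1 \<and> x \<circ> inv p = orbit_rep n \<kappa> t then 1 else 0) \<noteq> (0::real)"
    using sum.not_neutral_contains_not_neutral[OF assms[unfolded skew_basis_def antisymmetrize_def]]
    by blast
  then have p: "p permutes {1..n}" and "p i = 1" and "x \<circ> inv p = orbit_rep n \<kappa> t"
    by (auto split: if_splits)
  moreover have "x = x \<circ> inv p \<circ> p" by (simp add: comp_assoc permutes_inv_o(2)[OF p])
  ultimately show ?thesis by auto
qed

lemma skew_basis_at_orbit: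
  assumes t: "t \<in> orbit_labels n \<kappa>" and u: "u \<in> orbit_labels n \<kappa>"
    and p: "p permutes {1..n}" "p i = 1"
  shows "skew_basis n \<kappa> u i (orbit_rep n \<kappa> t \<circ> p) = (if u = t then of_int (sign p) else 0)"
proof -
  have term_nonzero_iff: "p' i = 1 \<and> orbit_rep n \<kappa> t \<circ> p \<circ> inv p' = orbit_rep n \<kappa> u
      \<longleftrightarrow> p' = p \<and> u = t" if p': "p' permutes {1..n}" for p'
  proof
    assume h: "p' i = 1 \<and> orbit_rep n \<kappa> t \<circ> p \<circ> inv p' = orbit_rep n \<kappa> u"
    have "orbit_rep n \<kappa> t \<circ> p = orbit_rep n \<kappa> t \<circ> p \<circ> inv p' \<circ> p'"
      by (simp add: comp_assoc permutes_inv_o(2)[OF p'])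
    also have "\<dots> = orbit_rep n \<kappa> u \<circ> p'" using h by simp
    finally show "p' = p \<and> u = t" using orbit_rep_comp_unique[OF t u p p'] h by blast
  next
    assume "p' = p \<and> u = t"
    then show "p' i = 1 \<and> orbit_rep n \<kappa> t \<circ> p \<circ> inv p' = orbit_rep n \<kappa> u"
      using p by (simp add: comp_assoc permutes_inv_o(1)[OF p(1)])
  qed
  have "skew_basis n \<kappa> u i (orbit_rep n \<kappa> t \<circ> p)
      = (\<Sum>p' | p' permutes {1..n}. if p' = p \<and> u = t then of_int (sign p') else 0)"
    unfolding skew_basis_def antisymmetrize_def
    by (rule sum.cong[OF refl]) (simp only: mem_Collect_eq term_nonzero_iff, simp)
  also have "\<dots> = (if u = t then of_int (sign p) else 0)"
    using p by (simp add: finite_permutations)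
  finally show ?thesis .
qed

lemma orbit_of_injective_profile:
  assumes i: "i \<in> {1..n}" and x: "x \<in> profiles n \<kappa>" and inj: "inj_on x ({1..n} - {i})"
  shows "\<exists>t\<in>orbit_labels n \<kappa>. \<exists>p. p permutes {1..n} \<and> p i = 1 \<and> x = orbit_rep n \<kappa> t \<circ> p"
proof -
  let ?others = "{1..n} - {i}"
  define t where "t = (x i, x ` ?others)"
  have "x k \<in> {1..\<kappa>}" if "k \<in> {1..n}" for k
    using x that by (auto simp: profiles_def PiE_def Pi_def)
  moreover have "card (x ` ?others) = n - 1" using card_image[OF inj] i by simp
  ultimately have t: "t \<in> orbit_labels n \<kappa>" using i by (auto simp: orbit_labels_def t_def)
  define r where "r = orbit_rep n \<kappa> t"
  have r: "bij_betw r {2..n} (x ` ?others)"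
    using orbit_rep(3,4)[OF t] by (simp add: r_def t_def bij_betw_def)
  define p where "p k = (if k = i then 1 else if k \<in> {1..n} then inv_into {2..n} r (x k) else k)"
    for k
  have "bij_betw (inv_into {2..n} r \<circ> x) ?others {2..n}"
    by (rule bij_betw_trans[OF inj_on_imp_bij_betw[OF inj] bij_betw_inv_into[OF r]])
  then have "bij_betw p ?others {2..n}"
    by (rule bij_betw_cong[THEN iffD1, rotated]) (simp add: p_def)
  moreover have "bij_betw p {i} {1}" by (simp add: p_def)
  ultimately have "bij_betw p (?others \<union> {i}) ({2..n} \<union> {1})" by (rule bij_betw_combine) auto
  moreover have "?others \<union> {i} = {1..n}" "{2..n} \<union> {1} = {1..n}" using i n_pos by auto
  ultimately have "bij_betw p {1..n} {1..n}" by simp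
  then have p: "p permutes {1..n}" by (rule bij_imp_permutes) (use i in \<open>auto simp: p_def\<close>)
  have "x k = r (p k)" for k
  proof -
    consider "k = i" | "k \<in> ?others" | "k \<notin> {1..n}" by blast
    then show ?thesis
    proof cases
      case 1
      then show ?thesis using orbit_rep(2)[OF t] by (simp add: p_def r_def t_def)
    next
      case 2
      then have "x k \<in> r ` {2..n}" using r by (auto simp: bij_betw_def)
      with 2 show ?thesis by (simp add: p_def f_inv_into_f)
    next
      case 3
      then show ?thesis using x orbit_rep(1)[OF t] i
        by (auto simp: p_def r_def profiles_def PiE_def extensional_def)
    qed
  qed
  then have "x = orbit_rep n \<kappa> t \<circ> p" by (auto simp: r_def)
  moreover have "p i = 1" by (simp add: p_def)
  ultimately show ?thesis using t p by blast
qed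

lemma skew_game_eq_0_off_orbits:
  assumes c: "c \<in> skew_games n \<kappa>"
    and off: "\<not> (\<exists>t\<in>orbit_labels n \<kappa>. \<exists>p.
        p permutes {1..n} \<and> p i = 1 \<and> x = orbit_rep n \<kappa> t \<circ> p)"
  shows "c i x = 0"
proof (cases "i \<in> {1..n} \<and> x \<in> profiles n \<kappa>")
  case False
  then show ?thesis using c by (auto simp: skew_games_def games_def)
next
  case True
  then have "\<not> inj_on x ({1..n} - {i})" using orbit_of_injective_profile off by blast
  then obtain j k where "j \<in> {1..n} - {i}" "k \<in> {1..n} - {i}" "j \<noteq> k" "x j = x k"
    unfolding inj_on_def by blast
  with True c show ?thesis
    using skew_symmetric_repeated_strategy by (auto simp: skew_games_def)
qed

lemma sum_skew_basis_at_orbit: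
  assumes t: "t \<in> orbit_labels n \<kappa>" and p: "p permutes {1..n}" "p i = 1"
  shows "(\<Sum>u\<in>orbit_labels n \<kappa>. f u * skew_basis n \<kappa> u i (orbit_rep n \<kappa> t \<circ> p))
    = f t * of_int (sign p)"
proof -
  have "(\<Sum>u\<in>orbit_labels n \<kappa>. f u * skew_basis n \<kappa> u i (orbit_rep n \<kappa> t \<circ> p))
      = (\<Sum>u\<in>orbit_labels n \<kappa>. if u = t then f u * of_int (sign p) else 0)"
    by (rule sum.cong[OF refl]) (simp add: skew_basis_at_orbit[OF t _ p])
  also have "\<dots> = f t * of_int (sign p)" using t finite_orbit_labels by simp
  finally show ?thesis .
qed

lemma skew_game_expansion:
  assumes c: "c \<in> skew_games n \<kappa>"
  shows "c = (\<Sum>t\<in>orbit_labels n \<kappa>. game_scale (c 1 (orbit_rep n \<kappa> t)) (skew_basis n \<kappa> t))"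
proof (intro ext)
  fix i x
  let ?coord = "\<lambda>u. c 1 (orbit_rep n \<kappa> u)"
  have expand: "(\<Sum>u\<in>orbit_labels n \<kappa>. game_scale (?coord u) (skew_basis n \<kappa> u)) i x
      = (\<Sum>u\<in>orbit_labels n \<kappa>. ?coord u * skew_basis n \<kappa> u i x)"
    by (simp add: sum_game_apply game_scale_def)
  consider (orbit) t p where "t \<in> orbit_labels n \<kappa>" "p permutes {1..n}" "p i = 1"
      "x = orbit_rep n \<kappa> t \<circ> p"
    | (off) "\<not> (\<exists>t\<in>orbit_labels n \<kappa>. \<exists>p.
        p permutes {1..n} \<and> p i = 1 \<and> x = orbit_rep n \<kappa> t \<circ> p)"
    by blast
  then show "c i x = (\<Sum>u\<in>orbit_labels n \<kappa>. game_scale (?coord u) (skew_basis n \<kappa> u)) i x"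
  proof cases
    case orbit
    have i: "i \<in> {1..n}" using permutes_in_image[OF orbit(2), of i] orbit(3) n_pos by simp
    have skew: "skew_symmetric n \<kappa> c" using c by (simp add: skew_games_def)
    have "c i x = of_int (sign p) * ?coord t"
      using skew_symmetric_comp[OF skew orbit(2) i orbit_rep(1)[OF orbit(1)]] orbit(3,4) by simp
    also have "\<dots> = (\<Sum>u\<in>orbit_labels n \<kappa>. ?coord u * skew_basis n \<kappa> u i x)"
      unfolding orbit(4) sum_skew_basis_at_orbit[OF orbit(1-3)] by simp
    finally show ?thesis using expand by simp
  next
    case off
    then have "skew_basis n \<kappa> u i x = 0" if "u \<in> orbit_labels n \<kappa>" for u
      using skew_basis_nonzeroD that by blast
    then show ?thesis using expand skew_game_eq_0_off_orbits[OF c off] by simp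
  qed
qed

lemma inj_on_skew_basis: "inj_on (skew_basis n \<kappa>) (orbit_labels n \<kappa>)"
proof (rule inj_onI)
  fix t u assume t: "t \<in> orbit_labels n \<kappa>" and u: "u \<in> orbit_labels n \<kappa>"
    and "skew_basis n \<kappa> t = skew_basis n \<kappa> u"
  then have "skew_basis n \<kappa> t 1 (orbit_rep n \<kappa> u \<circ> id)
      = skew_basis n \<kappa> u 1 (orbit_rep n \<kappa> u \<circ> id)"
    by simp
  then show "t = u"
    using skew_basis_at_orbit[OF u t permutes_id] skew_basis_at_orbit[OF u u permutes_id]
    by (simp split: if_splits)
qed

lemma skew_basis_independent: "game.independent (skew_basis n \<kappa> ` orbit_labels n \<kappa>)"
proof
  assume "game.dependent (skew_basis n \<kappa> ` orbit_labels n \<kappa>)"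
  then obtain a where nonzero: "\<exists>v\<in>skew_basis n \<kappa> ` orbit_labels n \<kappa>. a v \<noteq> 0"
    and "(\<Sum>v\<in>skew_basis n \<kappa> ` orbit_labels n \<kappa>. game_scale (a v) v) = 0"
    using game.dependent_finite[OF finite_imageI[OF finite_orbit_labels]] by blast
  then have combination:
      "(\<Sum>t\<in>orbit_labels n \<kappa>. game_scale (a (skew_basis n \<kappa> t)) (skew_basis n \<kappa> t)) = 0"
    by (simp add: sum.reindex[OF inj_on_skew_basis])
  have "a (skew_basis n \<kappa> s) = 0" if s: "s \<in> orbit_labels n \<kappa>" for s
  proof -
    have "0 = (\<Sum>t\<in>orbit_labels n \<kappa>.
        a (skew_basis n \<kappa> t) * skew_basis n \<kappa> t 1 (orbit_rep n \<kappa> s \<circ> id))"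
      using fun_cong[OF fun_cong[OF combination, of 1], of "orbit_rep n \<kappa> s \<circ> id"]
      by (simp add: sum_game_apply game_scale_def)
    also have "\<dots> = a (skew_basis n \<kappa> s)"
      using sum_skew_basis_at_orbit[OF s permutes_id, of 1] by simp
    finally show ?thesis by simp
  qed
  with nonzero show False by auto
qed

lemma dim_skew_games: "game.dim (skew_games n \<kappa>) = \<kappa> * (\<kappa> choose (n - 1))"
proof -
  have "skew_games n \<kappa> \<subseteq> game.span (skew_basis n \<kappa> ` orbit_labels n \<kappa>)"
  proof
    fix c assume c: "c \<in> skew_games n \<kappa>"
    have "(\<Sum>t\<in>orbit_labels n \<kappa>. game_scale (c 1 (orbit_rep n \<kappa> t)) (skew_basis n \<kappa> t))
        \<in> game.span (skew_basis n \<kappa> ` orbit_labels n \<kappa>)"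
      by (intro game.span_sum game.span_scale game.span_base) auto
    then show "c \<in> game.span (skew_basis n \<kappa> ` orbit_labels n \<kappa>)"
      using skew_game_expansion[OF c] by simp
  qed
  then have "game.dim (skew_games n \<kappa>) = card (skew_basis n \<kappa> ` orbit_labels n \<kappa>)"
    using skew_basis_in_skew_games skew_basis_independent
    by (intro game.basis_card_eq_dim[symmetric]) auto
  then show ?thesis using card_image[OF inj_on_skew_basis] card_orbit_labels by simp
qed

end

lemma real_choose_pred_eq_fact:
  fixes n \<kappa> :: nat
  assumes "1 \<le> n" and "n \<le> \<kappa> + 1"
  shows "real (\<kappa> choose (n - 1)) = fact \<kappa> / (fact (n - 1) * fact (\<kappa> - n + 1))"
proof -
  \<comment> \<open>For n = \<kappa> + 1 the truncated subtraction gives \<kappa> - n + 1 = 1, not 0;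
    both factorials are 1.\<close>
  have fact_eq: "(fact (\<kappa> - (n - 1)) :: real) = fact (\<kappa> - n + 1)"
  proof (cases "n \<le> \<kappa>")
    case True
    then have "\<kappa> - (n - 1) = \<kappa> - n + 1" using assms(1) by simp
    then show ?thesis by simp
  next
    case False
    then have "n = \<kappa> + 1" using assms(2) by simp
    then show ?thesis by simp
  qed
  have "real (\<kappa> choose (n - 1)) = fact \<kappa> / (fact (n - 1) * fact (\<kappa> - (n - 1)))"
    by (rule binomial_fact) (use assms(2) in simp)
  then show ?thesis by (simp only: fact_eq)
qed

theorem corollary4p6:
  fixes n \<kappa> :: nat
  assumes "2 \<le> n" and "n \<le> \<kappa> + 1"
  shows "vector_space.dim game_scale (skew_games n \<kappa>) = \<kappa> * (\<kappa> choose (n - 1))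
    \<and> real (vector_space.dim game_scale (skew_games n \<kappa>))
        = real \<kappa> * fact \<kappa> / (fact (n - 1) * fact (\<kappa> - n + 1))"
proof -
  have "1 \<le> n" using assms(1) by simp
  then have "vector_space.dim game_scale (skew_games n \<kappa>) = \<kappa> * (\<kappa> choose (n - 1))"
    by (rule dim_skew_games)
  then show ?thesis using real_choose_pred_eq_fact[OF \<open>1 \<le> n\<close> assms(2)] by simp
qed

end
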